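(* Let $R$ be a partially ordered commutative ring. Then (1) $R$ is archimedean if and only if all finitely generated subrings of $R$ are archimedean; (2) $R$ is strongly localizable if and only if all finitely generated subrings of $R$ are strongly localizable.
   Context: Rings are commutative with unit $1$; subrings contain $1$ and carry the induced order ($S^+=S\cap R^+$). A partially ordered commutative ring is a commutative ring with a partial order $\le$ with $r\le s\Rightarrow r+t\le s+t$, whose positive cone $R^+=\{r:0\le r\}$ is closed under multiplication and contains all squares. $\mathbb{N}=\{1,2,\dots\}$. $R$ is archimedean if whenever $g,h\in R$ satisfy $kg+h\in R^+$ for all $k\in\mathbb{N}$, then $g\in R^+$. $\mathrm{Loc}(R)$ is the set of $s\in 1+R^+$ such that for all $r\in R$, $rs\in R^+$ implies $r\in R^+$. $R$ is strongly localizable if $r^2\in R^+$ for all $r\in R$ and $\mathrm{Loc}(R)=1+R^+$. *)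

theory Defs
  imports Main
begin

definition po_comm_ring :: "('a::comm_ring_1 \<Rightarrow> 'a \<Rightarrow> bool) \<Rightarrow> bool" where
  "po_comm_ring le \<longleftrightarrow>
     (\<forall>x. le x x) \<and>
     (\<forall>x y z. le x y \<longrightarrow> le y z \<longrightarrow> le x z) \<and>
     (\<forall>x y. le x y \<longrightarrow> le y x \<longrightarrow> x = y) \<and>
     (\<forall>r s t. le r s \<longrightarrow> le (r + t) (s + t)) \<and>
     (\<forall>r s. le 0 r \<longrightarrow> le 0 s \<longrightarrow> le 0 (r * s)) \<and>
     (\<forall>r. le 0 (r * r))"

definition pos_cone :: "('a::comm_ring_1 \<Rightarrow> 'a \<Rightarrow> bool) \<Rightarrow> 'a set \<Rightarrow> 'a set" where
  "pos_cone le S = {r \<in> S. le 0 r}"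

definition is_subring :: "'a::comm_ring_1 set \<Rightarrow> bool" where
  "is_subring S \<longleftrightarrow> 1 \<in> S \<and> (\<forall>x\<in>S. \<forall>y\<in>S. x + y \<in> S \<and> x - y \<in> S \<and> x * y \<in> S)"

definition subring_gen :: "'a::comm_ring_1 set \<Rightarrow> 'a set" where
  "subring_gen F = \<Inter>{S. is_subring S \<and> F \<subseteq> S}"

definition archimedean_on :: "('a::comm_ring_1 \<Rightarrow> 'a \<Rightarrow> bool) \<Rightarrow> 'a set \<Rightarrow> bool" where
  "archimedean_on le S \<longleftrightarrow>
     (\<forall>g\<in>S. \<forall>h\<in>S. (\<forall>k::nat. k \<ge> 1 \<longrightarrow> of_nat k * g + h \<in> pos_cone le S)
        \<longrightarrow> g \<in> pos_cone le S)"

definition Loc :: "('a::comm_ring_1 \<Rightarrow> 'a \<Rightarrow> bool) \<Rightarrow> 'a set \<Rightarrow> 'a set" where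
  "Loc le S = {s \<in> (\<lambda>p. 1 + p) ` pos_cone le S.
                 \<forall>r\<in>S. r * s \<in> pos_cone le S \<longrightarrow> r \<in> pos_cone le S}"

definition strongly_localizable_on :: "('a::comm_ring_1 \<Rightarrow> 'a \<Rightarrow> bool) \<Rightarrow> 'a set \<Rightarrow> bool" where
  "strongly_localizable_on le S \<longleftrightarrow>
     (\<forall>r\<in>S. r ^ 2 \<in> pos_cone le S) \<and> Loc le S = (\<lambda>p. 1 + p) ` pos_cone le S"

end

theory Submission
  imports Defs
begin

text \<open>Both properties are local: each instance of them involves at most two elements of
  the ring, and the order of a subring is induced from that of the ring. Hence a ring has
  the property as soon as every subring generated by two elements has it, and every
  subring inherits it from the ring.\<close>

lemma mem_pos_cone [simp]: "x \<in> pos_cone le S \<longleftrightarrow> x \<in> S \<and> le 0 x"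
  unfolding pos_cone_def by simp

lemma is_subring_subring_gen: "is_subring (subring_gen F)"
  unfolding is_subring_def subring_gen_def by auto

lemma subset_subring_gen: "F \<subseteq> subring_gen F"
  unfolding subring_gen_def by auto

lemma is_subring_one: "is_subring S \<Longrightarrow> 1 \<in> S"
  unfolding is_subring_def by blast

lemma is_subring_add: "is_subring S \<Longrightarrow> x \<in> S \<Longrightarrow> y \<in> S \<Longrightarrow> x + y \<in> S"
  unfolding is_subring_def by blast

lemma is_subring_mult: "is_subring S \<Longrightarrow> x \<in> S \<Longrightarrow> y \<in> S \<Longrightarrow> x * y \<in> S"
  unfolding is_subring_def by blast

lemma is_subring_of_nat:
  assumes "is_subring S"
  shows "of_nat n \<in> S"
proof (induction n)
  case 0
  have "1 - 1 \<in> S"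
    using assms unfolding is_subring_def by blast
  then show ?case by simp
next
  case (Suc n)
  then show ?case
    using assms by (simp add: is_subring_add is_subring_one)
qed

lemma archimedean_on_subset:
  assumes "archimedean_on le UNIV"
  shows "archimedean_on le S"
  using assms unfolding archimedean_on_def by auto

lemma archimedean_on_UNIV_if_finitely_generated:
  assumes "\<And>F. finite F \<Longrightarrow> archimedean_on le (subring_gen F)"
  shows "archimedean_on le UNIV"
  unfolding archimedean_on_def
proof (intro ballI impI)
  fix g h :: 'a
  assume bound: "\<forall>k::nat. k \<ge> 1 \<longrightarrow> of_nat k * g + h \<in> pos_cone le UNIV"
  let ?S = "subring_gen {g, h}"
  have S: "is_subring ?S" and g: "g \<in> ?S" and h: "h \<in> ?S"
    using is_subring_subring_gen subset_subring_gen[of "{g, h}"] by auto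
  have "of_nat k * g + h \<in> ?S" for k
    using S g h by (simp add: is_subring_add is_subring_mult is_subring_of_nat)
  then have "\<forall>k::nat. k \<ge> 1 \<longrightarrow> of_nat k * g + h \<in> pos_cone le ?S"
    using bound by simp
  then have "g \<in> pos_cone le ?S"
    using assms[of "{g, h}"] g h unfolding archimedean_on_def by blast
  then show "g \<in> pos_cone le UNIV" by simp
qed

lemma archimedean_on_UNIV_iff_finitely_generated:
  "archimedean_on le UNIV \<longleftrightarrow> (\<forall>F. finite F \<longrightarrow> archimedean_on le (subring_gen F))"
  using archimedean_on_subset archimedean_on_UNIV_if_finitely_generated by blast

lemma Loc_subset: "Loc le S \<subseteq> (\<lambda>p. 1 + p) ` pos_cone le S"
  unfolding Loc_def by blast

lemma strongly_localizable_on_subring: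
  assumes R: "strongly_localizable_on le UNIV" and S: "is_subring S"
  shows "strongly_localizable_on le S"
  unfolding strongly_localizable_on_def
proof (intro conjI ballI subset_antisym Loc_subset subsetI)
  fix r assume "r \<in> S"
  then show "r ^ 2 \<in> pos_cone le S"
    using R S unfolding strongly_localizable_on_def power2_eq_square
    by (simp add: is_subring_mult)
next
  fix s assume "s \<in> (\<lambda>p. 1 + p) ` pos_cone le S"
  then obtain p where p: "p \<in> S" "le 0 p" and s: "s = 1 + p" by auto
  have "s \<in> Loc le UNIV"
    using R p s unfolding strongly_localizable_on_def by auto
  then have "\<forall>r. le 0 (r * s) \<longrightarrow> le 0 r"
    unfolding Loc_def by simp
  then show "s \<in> Loc le S"
    unfolding Loc_def using p s by auto
qed

lemma strongly_localizable_on_UNIV_if_finitely_generated: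
  assumes fg: "\<And>F. finite F \<Longrightarrow> strongly_localizable_on le (subring_gen F)"
  shows "strongly_localizable_on le UNIV"
  unfolding strongly_localizable_on_def
proof (intro conjI ballI subset_antisym Loc_subset subsetI)
  fix r :: 'a
  have "r \<in> subring_gen {r}"
    using subset_subring_gen by blast
  then show "r ^ 2 \<in> pos_cone le UNIV"
    using fg[of "{r}"] unfolding strongly_localizable_on_def by simp
next
  fix s assume "s \<in> (\<lambda>p. 1 + p) ` pos_cone le UNIV"
  then obtain p where p: "le 0 p" and s: "s = 1 + p" by auto
  have "le 0 r" if rs: "le 0 (r * s)" for r
  proof -
    let ?S = "subring_gen {p, r}"
    have S: "is_subring ?S" and pS: "p \<in> ?S" and rS: "r \<in> ?S"
      using is_subring_subring_gen subset_subring_gen[of "{p, r}"] by auto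
    have sS: "s \<in> ?S"
      using S pS s by (simp add: is_subring_add is_subring_one)
    have "s \<in> Loc le ?S"
      using fg[of "{p, r}"] p pS s unfolding strongly_localizable_on_def by auto
    moreover have "r * s \<in> pos_cone le ?S"
      using S rS sS rs by (simp add: is_subring_mult)
    ultimately show "le 0 r"
      using rS unfolding Loc_def by simp
  qed
  then show "s \<in> Loc le UNIV"
    unfolding Loc_def using p s by auto
qed

lemma strongly_localizable_on_UNIV_iff_finitely_generated:
  "strongly_localizable_on le UNIV \<longleftrightarrow>
     (\<forall>F. finite F \<longrightarrow> strongly_localizable_on le (subring_gen F))"
  using strongly_localizable_on_subring[OF _ is_subring_subring_gen]
    strongly_localizable_on_UNIV_if_finitely_generated by blast

theorem proposition6:
  fixes le :: "'a::comm_ring_1 \<Rightarrow> 'a \<Rightarrow> bool"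
  assumes "po_comm_ring le"
  shows "(archimedean_on le UNIV \<longleftrightarrow>
            (\<forall>F. finite F \<longrightarrow> archimedean_on le (subring_gen F)))
       \<and> (strongly_localizable_on le UNIV \<longleftrightarrow>
            (\<forall>F. finite F \<longrightarrow> strongly_localizable_on le (subring_gen F)))"
  using archimedean_on_UNIV_iff_finitely_generated
    strongly_localizable_on_UNIV_iff_finitely_generated by blast

end
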